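(* Let $X$ be a Tychonoff space with $|X|>1$. Then $\mathrm{Rad}(\mathbb{AG}(X))=1$ if $|X|=2$; $\mathrm{Rad}(\mathbb{AG}(X))=2$ if $|X|>2$ and $X$ has an isolated point; and $\mathrm{Rad}(\mathbb{AG}(X))=3$ if $|X|>2$ and $X$ has no isolated point.
   Context: $C(X)$ is the ring of real-valued continuous functions on $X$. $\mathbb{A}(X)$ is the set of nonzero ideals $I$ of $C(X)$ for which there is a nonzero ideal $J$ with $IJ=\{0\}$; $\mathbb{AG}(X)$ has vertex set $\mathbb{A}(X)$, distinct $I,J$ adjacent iff $IJ=\{0\}$. The eccentricity of a vertex is the maximum distance from it to other vertices, and the radius $\mathrm{Rad}$ is the minimum eccentricity over all vertices. *)

theory Defs
  imports "HOL-Analysis.Analysis" "HOL-Library.Extended_Nat"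
begin

definition tychonoff_space :: "'a topology \<Rightarrow> bool" where
  "tychonoff_space X \<longleftrightarrow> completely_regular_space X \<and> t1_space X"

text \<open>The ring C(X) of real-valued continuous functions on X; functions are
  normalised to be 0 outside the topological space so that equality of
  elements is equality on X.\<close>
definition CX :: "'a topology \<Rightarrow> ('a \<Rightarrow> real) set" where
  "CX X = {f. continuous_map X euclideanreal f \<and> (\<forall>x. x \<notin> topspace X \<longrightarrow> f x = 0)}"

definition is_ideal_CX :: "'a topology \<Rightarrow> ('a \<Rightarrow> real) set \<Rightarrow> bool" where
  "is_ideal_CX X I \<longleftrightarrow> I \<subseteq> CX X \<and> (\<lambda>x. 0) \<in> I \<and>
     (\<forall>f\<in>I. \<forall>g\<in>I. (\<lambda>x. f x + g x) \<in> I) \<and>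
     (\<forall>f\<in>I. (\<lambda>x. - f x) \<in> I) \<and>
     (\<forall>f\<in>I. \<forall>h\<in>CX X. (\<lambda>x. h x * f x) \<in> I)"

definition ideal_prod :: "('a \<Rightarrow> real) set \<Rightarrow> ('a \<Rightarrow> real) set \<Rightarrow> ('a \<Rightarrow> real) set" where
  "ideal_prod I J = {f. \<exists>(n::nat) fs gs. (\<forall>i<n. fs i \<in> I \<and> gs i \<in> J) \<and>
                         f = (\<lambda>x. \<Sum>i<n. fs i x * gs i x)}"

definition nonzero_ideal :: "'a topology \<Rightarrow> ('a \<Rightarrow> real) set \<Rightarrow> bool" where
  "nonzero_ideal X I \<longleftrightarrow> is_ideal_CX X I \<and> I \<noteq> {\<lambda>x. 0}"

definition AX :: "'a topology \<Rightarrow> ('a \<Rightarrow> real) set set" where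
  "AX X = {I. nonzero_ideal X I \<and> (\<exists>J. nonzero_ideal X J \<and> ideal_prod I J = {\<lambda>x. 0})}"

definition AG_adj :: "'a topology \<Rightarrow> ('a \<Rightarrow> real) set \<Rightarrow> ('a \<Rightarrow> real) set \<Rightarrow> bool" where
  "AG_adj X I J \<longleftrightarrow> I \<in> AX X \<and> J \<in> AX X \<and> I \<noteq> J \<and> ideal_prod I J = {\<lambda>x. 0}"

text \<open>Graph distance (infinity if no path).\<close>
definition AG_dist :: "'a topology \<Rightarrow> ('a \<Rightarrow> real) set \<Rightarrow> ('a \<Rightarrow> real) set \<Rightarrow> enat" where
  "AG_dist X I J = Inf {enat n | n. \<exists>p :: nat \<Rightarrow> ('a \<Rightarrow> real) set.
      p 0 = I \<and> p n = J \<and> (\<forall>i<n. AG_adj X (p i) (p (Suc i)))}"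

definition AG_ecc :: "'a topology \<Rightarrow> ('a \<Rightarrow> real) set \<Rightarrow> enat" where
  "AG_ecc X I = (SUP J\<in>AX X. AG_dist X I J)"

definition AG_rad :: "'a topology \<Rightarrow> enat" where
  "AG_rad X = (INF I\<in>AX X. AG_ecc X I)"

end

theory Submission
  imports Defs
begin

text \<open>Two ideals of \<open>C(X)\<close> annihilate each other iff their cozero sets are disjoint, so the
  graph is governed by cozero sets. By complete regularity every open set \<open>V\<close> is the cozero set
  of the ideal \<open>O(V)\<close> of functions vanishing outside \<open>V\<close>, and a nonzero ideal is a vertex iff
  its cozero set is not dense. Vertices \<open>I\<close> and \<open>J\<close> are joined through the exteriors \<open>A\<close> and
  \<open>B\<close> of their cozero sets, by \<open>I - O(A \<inter> B) - J\<close> or by \<open>I - O(A) - O(B) - J\<close>, so every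
  eccentricity is at most 3. For an isolated point \<open>x\<close>, \<open>O({x})\<close> is adjacent to every vertex
  whose cozero set misses \<open>x\<close>, and of two adjacent vertices one misses \<open>x\<close>; hence its
  eccentricity is at most 2, and at most 1 when \<open>X\<close> has only two points. Conversely, with three
  points every vertex has a non-neighbour, and without isolated points every vertex has another
  vertex at distance 3.\<close>

section \<open>Walks and distances in the annihilating-ideal graph\<close>

lemma AG_dist_le_enat_iff:
  "AG_dist X I J \<le> enat n \<longleftrightarrow>
     (\<exists>m p. m \<le> n \<and> p 0 = I \<and> p m = J \<and> (\<forall>i<m. AG_adj X (p i) (p (Suc i))))"
  (is "_ \<longleftrightarrow> ?walk")
proof
  define W where "W = {enat m | m. \<exists>p. p 0 = I \<and> p m = J \<and> (\<forall>i<m. AG_adj X (p i) (p (Suc i)))}"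
  have dist: "AG_dist X I J = Inf W"
    unfolding AG_dist_def W_def ..
  assume le: "AG_dist X I J \<le> enat n"
  then have "W \<noteq> {}"
    unfolding dist by (auto simp: Inf_enat_def)
  then have "Inf W \<in> W"
    unfolding Inf_enat_def by (auto intro: LeastI_ex)
  then show ?walk
    using le unfolding dist W_def by auto
next
  assume ?walk
  then obtain m where m: "m \<le> n" and walk:
    "enat m \<in> {enat m | m. \<exists>p. p 0 = I \<and> p m = J \<and> (\<forall>i<m. AG_adj X (p i) (p (Suc i)))}"
    by blast
  show "AG_dist X I J \<le> enat n"
    unfolding AG_dist_def using m by (intro Inf_lower2[OF walk]) simp
qed

lemma AG_dist_self: "AG_dist X I I \<le> enat 0"
  unfolding AG_dist_le_enat_iff by auto

lemma AG_dist_le_Suc: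
  assumes "AG_adj X I K" and "AG_dist X K J \<le> enat n"
  shows "AG_dist X I J \<le> enat (Suc n)"
proof -
  obtain m p where "m \<le> n" "p 0 = K" "p m = J" "\<forall>i<m. AG_adj X (p i) (p (Suc i))"
    using assms(2) unfolding AG_dist_le_enat_iff by blast
  then have "Suc m \<le> Suc n \<and> (case_nat I p) 0 = I \<and> (case_nat I p) (Suc m) = J \<and>
      (\<forall>i<Suc m. AG_adj X (case_nat I p i) (case_nat I p (Suc i)))"
    using assms(1) by (auto simp: less_Suc_eq_0_disj)
  then show ?thesis
    unfolding AG_dist_le_enat_iff by blast
qed

lemma AG_dist_le_1: "AG_adj X I J \<Longrightarrow> AG_dist X I J \<le> 1"
  using AG_dist_le_Suc[OF _ AG_dist_self] by (simp add: one_enat_def)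

lemma AG_dist_le_2: "AG_adj X I K \<Longrightarrow> AG_adj X K J \<Longrightarrow> AG_dist X I J \<le> 2"
  using AG_dist_le_Suc[OF _ AG_dist_le_Suc[OF _ AG_dist_self]]
  by (simp add: numeral_eq_enat numeral_2_eq_2)

lemma AG_dist_le_3:
  "AG_adj X I K \<Longrightarrow> AG_adj X K L \<Longrightarrow> AG_adj X L J \<Longrightarrow> AG_dist X I J \<le> 3"
  using AG_dist_le_Suc[OF _ AG_dist_le_Suc[OF _ AG_dist_le_Suc[OF _ AG_dist_self]]]
  by (simp add: numeral_eq_enat numeral_3_eq_3)

lemma AG_dist_le_2_cases:
  assumes "AG_dist X I J \<le> enat 2"
  shows "I = J \<or> AG_adj X I J \<or> (\<exists>K. AG_adj X I K \<and> AG_adj X K J)"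
proof -
  obtain m p where walk: "m \<le> 2" "p 0 = I" "p m = J" "\<forall>i<m. AG_adj X (p i) (p (Suc i))"
    using assms unfolding AG_dist_le_enat_iff by blast
  then consider "m = 0" | "m = 1" | "m = 2"
    by linarith
  then show ?thesis
    by cases (use walk in \<open>auto simp: numeral_2_eq_2\<close>)
qed

lemma one_le_AG_dist: "I \<noteq> J \<Longrightarrow> 1 \<le> AG_dist X I J"
  using AG_dist_le_enat_iff[of X I J 0] by (cases "AG_dist X I J") (auto simp: one_enat_def)

lemma three_le_AG_dist:
  assumes "I \<noteq> J" and "\<not> AG_adj X I J" and "\<And>K. AG_adj X I K \<Longrightarrow> \<not> AG_adj X K J"
  shows "3 \<le> AG_dist X I J"
proof (rule ccontr)
  assume "\<not> 3 \<le> AG_dist X I J"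
  then have "AG_dist X I J \<le> enat 2"
    by (cases "AG_dist X I J") (auto simp: numeral_eq_enat)
  then show False
    using AG_dist_le_2_cases assms by blast
qed

lemma two_le_AG_dist:
  assumes "I \<noteq> J" and "\<not> AG_adj X I J"
  shows "2 \<le> AG_dist X I J"
proof (rule ccontr)
  assume "\<not> 2 \<le> AG_dist X I J"
  then have "AG_dist X I J \<le> enat 1"
    by (cases "AG_dist X I J") (auto simp: numeral_eq_enat)
  then show False
    using assms AG_dist_le_enat_iff[of X I J 1] by (auto simp: le_Suc_eq)
qed

lemma AG_ecc_le: "(\<And>J. J \<in> AX X \<Longrightarrow> AG_dist X I J \<le> k) \<Longrightarrow> AG_ecc X I \<le> k"
  unfolding AG_ecc_def by (rule SUP_least)

lemma AG_ecc_ge: "J \<in> AX X \<Longrightarrow> k \<le> AG_dist X I J \<Longrightarrow> k \<le> AG_ecc X I"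
  unfolding AG_ecc_def by (rule SUP_upper2)

lemma AG_rad_eqI:
  assumes "I \<in> AX X" and "AG_ecc X I \<le> k" and "\<And>J. J \<in> AX X \<Longrightarrow> k \<le> AG_ecc X J"
  shows "AG_rad X = k"
  unfolding AG_rad_def using assms by (auto intro: antisym INF_lower2 INF_greatest)

section \<open>The ring C(X) and cozero sets of ideals\<close>

lemma CX_vanishes_outside: "f \<in> CX X \<Longrightarrow> x \<notin> topspace X \<Longrightarrow> f x = 0"
  unfolding CX_def by simp

lemma CX_continuous_map: "f \<in> CX X \<Longrightarrow> continuous_map X euclideanreal f"
  unfolding CX_def by simp

lemma CX_zero: "(\<lambda>x. 0) \<in> CX X"
  unfolding CX_def by simp

lemma CX_add: "f \<in> CX X \<Longrightarrow> g \<in> CX X \<Longrightarrow> (\<lambda>x. f x + g x) \<in> CX X"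
  unfolding CX_def by (auto intro: continuous_map_add)

lemma CX_uminus: "f \<in> CX X \<Longrightarrow> (\<lambda>x. - f x) \<in> CX X"
  unfolding CX_def by (auto intro: continuous_map_minus)

lemma CX_mult: "h \<in> CX X \<Longrightarrow> f \<in> CX X \<Longrightarrow> (\<lambda>x. h x * f x) \<in> CX X"
  unfolding CX_def by (auto intro: continuous_map_real_mult)

lemma is_ideal_CX_subset: "is_ideal_CX X I \<Longrightarrow> I \<subseteq> CX X"
  unfolding is_ideal_CX_def by simp

lemma is_ideal_CX_mult: "is_ideal_CX X I \<Longrightarrow> f \<in> I \<Longrightarrow> h \<in> CX X \<Longrightarrow> (\<lambda>x. h x * f x) \<in> I"
  unfolding is_ideal_CX_def by simp

definition coz :: "('a \<Rightarrow> real) set \<Rightarrow> 'a set" where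
  "coz I = {x. \<exists>f\<in>I. f x \<noteq> 0}"

lemma ideal_prod_eq_zero_iff:
  fixes I J :: "('a \<Rightarrow> real) set"
  shows "ideal_prod I J = {\<lambda>x. 0} \<longleftrightarrow> coz I \<inter> coz J = {}"
proof
  assume zero: "ideal_prod I J = {\<lambda>x. 0}"
  have "f x * g x = 0" if "f \<in> I" "g \<in> J" for f g x
  proof -
    have "(\<lambda>x. f x * g x) \<in> ideal_prod I J"
      unfolding ideal_prod_def
      by (rule CollectI, rule exI[of _ 1], rule exI[of _ "\<lambda>_. f"], rule exI[of _ "\<lambda>_. g"])
        (use that in auto)
    then show ?thesis
      using zero by (metis singletonD)
  qed
  then show "coz I \<inter> coz J = {}"
    unfolding coz_def by auto
next
  assume "coz I \<inter> coz J = {}"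
  then have "f x * g x = 0" if "f \<in> I" "g \<in> J" for f g x
    using that unfolding coz_def by auto
  then have "ideal_prod I J \<subseteq> {\<lambda>x. 0}"
    unfolding ideal_prod_def by (auto intro!: sum.neutral)
  moreover have "(\<lambda>x. 0) \<in> ideal_prod I J"
    unfolding ideal_prod_def by (intro CollectI exI[of _ "0::nat"]) auto
  ultimately show "ideal_prod I J = {\<lambda>x. 0}"
    by auto
qed

lemma nonzero_ideal_iff_coz: "nonzero_ideal X I \<longleftrightarrow> is_ideal_CX X I \<and> coz I \<noteq> {}"
proof -
  have "I \<noteq> {\<lambda>x. 0} \<longleftrightarrow> coz I \<noteq> {}" if "(\<lambda>x. 0) \<in> I"
    using that unfolding coz_def by (auto simp: fun_eq_iff)
  then show ?thesis
    unfolding nonzero_ideal_def is_ideal_CX_def by blast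
qed

lemma AG_adj_iff_disjoint_coz:
  "AG_adj X I J \<longleftrightarrow>
     is_ideal_CX X I \<and> is_ideal_CX X J \<and> coz I \<noteq> {} \<and> coz J \<noteq> {} \<and> coz I \<inter> coz J = {}"
  unfolding AG_adj_def AX_def ideal_prod_eq_zero_iff nonzero_ideal_iff_coz by blast

lemma AX_has_neighbour:
  assumes "I \<in> AX X"
  obtains J where "AG_adj X I J"
  using assms unfolding AX_def ideal_prod_eq_zero_iff nonzero_ideal_iff_coz AG_adj_iff_disjoint_coz
  by blast

lemma coz_subset_topspace:
  assumes "is_ideal_CX X I"
  shows "coz I \<subseteq> topspace X"
proof
  fix x assume "x \<in> coz I"
  then obtain f where "f \<in> CX X" "f x \<noteq> 0"
    using is_ideal_CX_subset[OF assms] unfolding coz_def by blast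
  then show "x \<in> topspace X"
    using CX_vanishes_outside by metis
qed

lemma openin_coz:
  assumes "is_ideal_CX X I"
  shows "openin X (coz I)"
proof -
  have "openin X {x \<in> topspace X. f x \<in> - {0}}" if "f \<in> I" for f
  proof (rule openin_continuous_map_preimage)
    show "continuous_map X euclideanreal f"
      using that is_ideal_CX_subset[OF assms] by (blast intro: CX_continuous_map)
  qed (simp add: open_Compl)
  then have "openin X (\<Union>f\<in>I. {x \<in> topspace X. f x \<in> - {0}})"
    by (intro openin_Union) auto
  moreover have "coz I = (\<Union>f\<in>I. {x \<in> topspace X. f x \<in> - {0}})"
    using coz_subset_topspace[OF assms] unfolding coz_def by auto
  ultimately show ?thesis
    by simp
qed

lemma ideal_const_mult:
  assumes I: "is_ideal_CX X I" and f: "f \<in> I"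
  shows "(\<lambda>x. c * f x) \<in> I"
proof -
  define h where "h x = (if x \<in> topspace X then c else 0)" for x
  have "continuous_map X euclideanreal h"
    by (rule continuous_map_eq[of _ _ "\<lambda>x. c"]) (simp_all add: h_def)
  then have "h \<in> CX X"
    unfolding CX_def by (simp add: h_def)
  then have "(\<lambda>x. h x * f x) \<in> I"
    by (rule is_ideal_CX_mult[OF I f])
  moreover have "h x * f x = c * f x" for x
  proof (cases "x \<in> topspace X")
    case False
    then have "f x = 0"
      using CX_vanishes_outside is_ideal_CX_subset[OF I] f by (metis subsetD)
    then show ?thesis
      by simp
  qed (simp add: h_def)
  ultimately show ?thesis
    by simp
qed

section \<open>Ideals of functions vanishing outside an open set\<close>

definition ideal_vanishing_outside :: "'a topology \<Rightarrow> 'a set \<Rightarrow> ('a \<Rightarrow> real) set" where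
  "ideal_vanishing_outside X V = {f \<in> CX X. \<forall>x. f x \<noteq> 0 \<longrightarrow> x \<in> V}"

lemma is_ideal_vanishing_outside: "is_ideal_CX X (ideal_vanishing_outside X V)"
  unfolding is_ideal_CX_def ideal_vanishing_outside_def
  by (intro conjI ballI) (auto simp: CX_zero CX_add CX_uminus CX_mult, metis add.right_neutral)

lemma coz_vanishing_outside:
  assumes cr: "completely_regular_space X" and V: "openin X V"
  shows "coz (ideal_vanishing_outside X V) = V"
proof
  show "V \<subseteq> coz (ideal_vanishing_outside X V)"
  proof
    fix p assume p: "p \<in> V"
    then have "closedin X (topspace X - V)" "p \<in> topspace X - (topspace X - V)"
      using V openin_subset by auto
    then obtain f where f: "continuous_map X (top_of_set {0..1::real}) f" "f p = 0"
        "f ` (topspace X - V) \<subseteq> {1}"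
      using cr unfolding completely_regular_space_def by meson
    define g where "g x = (if x \<in> topspace X then 1 - f x else 0)" for x
    have "continuous_map X euclideanreal (\<lambda>x. 1 - f x)"
      using f(1) by (intro continuous_intros) (simp add: continuous_map_in_subtopology)
    then have "continuous_map X euclideanreal g"
      by (rule continuous_map_eq) (simp add: g_def)
    then have "g \<in> CX X"
      unfolding CX_def by (simp add: g_def)
    moreover have "g x \<noteq> 0 \<Longrightarrow> x \<in> V" for x
      using f(3) by (auto simp: g_def image_subset_iff split: if_splits)
    moreover have "g p \<noteq> 0"
      using f(2) p openin_subset[OF V] by (auto simp: g_def)
    ultimately show "p \<in> coz (ideal_vanishing_outside X V)"
      unfolding coz_def ideal_vanishing_outside_def by blast
  qed
qed (unfold coz_def ideal_vanishing_outside_def, blast)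

text \<open>Every function vanishing off \<open>x\<close> is a constant multiple of any \<open>f \<in> J\<close> with \<open>f x \<noteq> 0\<close>.\<close>

lemma ideal_eq_vanishing_outside_singleton:
  assumes J: "is_ideal_CX X J" and "x \<in> coz J" "coz J \<subseteq> {x}"
  shows "J = ideal_vanishing_outside X {x}"
proof
  show "J \<subseteq> ideal_vanishing_outside X {x}"
    using assms(3) is_ideal_CX_subset[OF J] unfolding ideal_vanishing_outside_def coz_def by blast
  show "ideal_vanishing_outside X {x} \<subseteq> J"
  proof
    fix g assume g: "g \<in> ideal_vanishing_outside X {x}"
    obtain f where f: "f \<in> J" "f x \<noteq> 0"
      using assms(2) unfolding coz_def by blast
    define c where "c = g x / f x"
    have "f y = 0" if "y \<noteq> x" for y
      using assms(3) f(1) that unfolding coz_def by blast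
    moreover have "g y = 0" if "y \<noteq> x" for y
      using g that unfolding ideal_vanishing_outside_def by blast
    ultimately have "g y = c * f y" for y
      using f(2) unfolding c_def by (cases "y = x") auto
    then have "g = (\<lambda>y. c * f y)"
      by (rule ext)
    then show "g \<in> J"
      using ideal_const_mult[OF J f(1), of c] by simp
  qed
qed

lemma AG_adj_sym: "AG_adj X I J \<Longrightarrow> AG_adj X J I"
  unfolding AG_adj_iff_disjoint_coz by blast

lemma AG_adj_vanishing_outside:
  assumes "completely_regular_space X" and "is_ideal_CX X I" and "coz I \<noteq> {}"
    and "openin X V" and "V \<noteq> {}" and "coz I \<inter> V = {}"
  shows "AG_adj X I (ideal_vanishing_outside X V)"
  using assms is_ideal_vanishing_outside[of X V] coz_vanishing_outside[OF assms(1,4)]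
  unfolding AG_adj_iff_disjoint_coz by simp

lemma exterior_coz:
  assumes I: "is_ideal_CX X I" and not_dense: "X closure_of coz I \<noteq> topspace X"
  shows "openin X (topspace X - X closure_of coz I)"
    and "topspace X - X closure_of coz I \<noteq> {}"
    and "coz I \<inter> (topspace X - X closure_of coz I) = {}"
  using not_dense closure_of_subset_topspace[of X "coz I"]
    closure_of_subset[OF coz_subset_topspace[OF I]]
  by (auto simp: openin_diff)

lemma AG_adj_exterior:
  assumes cr: "completely_regular_space X" and I: "is_ideal_CX X I" "coz I \<noteq> {}"
    and not_dense: "X closure_of coz I \<noteq> topspace X"
  shows "AG_adj X I (ideal_vanishing_outside X (topspace X - X closure_of coz I))"
  using AG_adj_vanishing_outside[OF cr I exterior_coz[OF I(1) not_dense]] .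

lemma AX_iff_coz_not_dense:
  assumes cr: "completely_regular_space X"
  shows "I \<in> AX X \<longleftrightarrow> is_ideal_CX X I \<and> coz I \<noteq> {} \<and> X closure_of coz I \<noteq> topspace X"
proof
  assume "I \<in> AX X"
  then obtain J where "AG_adj X J I"
    by (metis AX_has_neighbour AG_adj_sym)
  then have I: "is_ideal_CX X I" "coz I \<noteq> {}" and J: "is_ideal_CX X J" "coz J \<noteq> {}"
    and disj: "coz J \<inter> coz I = {}"
    unfolding AG_adj_iff_disjoint_coz by simp_all
  have "coz J \<inter> X closure_of coz I = {}"
    using openin_Int_closure_of_eq_empty[OF openin_coz[OF J(1)]] disj by simp
  then have "X closure_of coz I \<noteq> topspace X"
    using J(2) coz_subset_topspace[OF J(1)] by blast
  with I show "is_ideal_CX X I \<and> coz I \<noteq> {} \<and> X closure_of coz I \<noteq> topspace X"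
    by simp
next
  assume "is_ideal_CX X I \<and> coz I \<noteq> {} \<and> X closure_of coz I \<noteq> topspace X"
  then have "AG_adj X I (ideal_vanishing_outside X (topspace X - X closure_of coz I))"
    using AG_adj_exterior[OF cr] by simp
  then show "I \<in> AX X"
    unfolding AG_adj_def by simp
qed

lemma vanishing_outside_in_AX:
  assumes cr: "completely_regular_space X" and V: "openin X V" "V \<noteq> {}"
    and "X closure_of V \<noteq> topspace X"
  shows "ideal_vanishing_outside X V \<in> AX X"
proof -
  have "coz (ideal_vanishing_outside X V) = V"
    by (rule coz_vanishing_outside[OF cr V(1)])
  then show ?thesis
    using assms is_ideal_vanishing_outside[of X V] unfolding AX_iff_coz_not_dense[OF cr] by simp
qed

section \<open>Upper bounds on eccentricities\<close>

lemma AG_ecc_le_3: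
  assumes cr: "completely_regular_space X" and I: "I \<in> AX X"
  shows "AG_ecc X I \<le> 3"
proof (rule AG_ecc_le)
  fix J assume J: "J \<in> AX X"
  define A where "A = topspace X - X closure_of coz I"
  define B where "B = topspace X - X closure_of coz J"
  have I': "is_ideal_CX X I" "coz I \<noteq> {}" and "X closure_of coz I \<noteq> topspace X"
    and J': "is_ideal_CX X J" "coz J \<noteq> {}" and "X closure_of coz J \<noteq> topspace X"
    using I J unfolding AX_iff_coz_not_dense[OF cr] by simp_all
  then have A: "openin X A" "A \<noteq> {}" "coz I \<inter> A = {}"
    and B: "openin X B" "B \<noteq> {}" "coz J \<inter> B = {}"
    unfolding A_def B_def using exterior_coz by simp_all
  have IA: "AG_adj X I (ideal_vanishing_outside X A)"
    using AG_adj_vanishing_outside[OF cr I' A] .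
  have JB: "AG_adj X J (ideal_vanishing_outside X B)"
    using AG_adj_vanishing_outside[OF cr J' B] .
  show "AG_dist X I J \<le> 3"
  proof (cases "A \<inter> B = {}")
    case True
    have "AG_adj X (ideal_vanishing_outside X A) (ideal_vanishing_outside X B)"
      using True A(2) by (intro AG_adj_vanishing_outside[OF cr is_ideal_vanishing_outside _ B(1,2)])
        (simp_all add: coz_vanishing_outside[OF cr A(1)])
    with IA show ?thesis
      using AG_adj_sym[OF JB] by (rule AG_dist_le_3)
  next
    case False
    have AB: "openin X (A \<inter> B)"
      using A(1) B(1) by (rule openin_Int)
    have "AG_adj X I (ideal_vanishing_outside X (A \<inter> B))"
      using A(3) False by (intro AG_adj_vanishing_outside[OF cr I' AB]) auto
    moreover have "AG_adj X J (ideal_vanishing_outside X (A \<inter> B))"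
      using B(3) False by (intro AG_adj_vanishing_outside[OF cr J' AB]) auto
    ultimately have "AG_dist X I J \<le> 2"
      using AG_adj_sym AG_dist_le_2 by metis
    then show ?thesis
      by (rule order_trans) (simp add: numeral_eq_enat)
  qed
qed

lemma vanishing_outside_isolated_in_AX:
  assumes cr: "completely_regular_space X" and t1: "t1_space X" and iso: "openin X {x}"
    and "y \<in> topspace X" "y \<noteq> x"
  shows "ideal_vanishing_outside X {x} \<in> AX X"
proof (rule vanishing_outside_in_AX[OF cr iso])
  have "x \<in> topspace X"
    using openin_subset[OF iso] by simp
  then have "X closure_of {x} = {x}"
    by (simp add: closure_of_closedin closedin_t1_singleton[OF t1])
  then show "X closure_of {x} \<noteq> topspace X"
    using assms(4,5) by blast
qed simp

lemma AG_adj_isolated: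
  assumes cr: "completely_regular_space X" and iso: "openin X {x}"
    and J: "is_ideal_CX X J" "coz J \<noteq> {}" "x \<notin> coz J"
  shows "AG_adj X (ideal_vanishing_outside X {x}) J"
  using AG_adj_vanishing_outside[OF cr J(1,2) iso] J(3) by (simp add: AG_adj_sym)

lemma AG_ecc_isolated_le_2:
  assumes cr: "completely_regular_space X" and iso: "openin X {x}"
  shows "AG_ecc X (ideal_vanishing_outside X {x}) \<le> 2"
proof (rule AG_ecc_le)
  fix J assume "J \<in> AX X"
  then obtain K where JK: "AG_adj X J K"
    by (rule AX_has_neighbour)
  then have J: "is_ideal_CX X J" "coz J \<noteq> {}" and K: "is_ideal_CX X K" "coz K \<noteq> {}"
    and "x \<notin> coz J \<or> x \<notin> coz K"
    unfolding AG_adj_iff_disjoint_coz by blast+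
  then consider "x \<notin> coz J" | "x \<notin> coz K"
    by blast
  then show "AG_dist X (ideal_vanishing_outside X {x}) J \<le> 2"
  proof cases
    case 1
    then have "AG_adj X (ideal_vanishing_outside X {x}) J"
      by (rule AG_adj_isolated[OF cr iso J])
    then have "AG_dist X (ideal_vanishing_outside X {x}) J \<le> 1"
      by (rule AG_dist_le_1)
    then show ?thesis
      by (rule order_trans) (simp add: one_enat_def numeral_eq_enat)
  next
    case 2
    then have "AG_adj X (ideal_vanishing_outside X {x}) K"
      by (rule AG_adj_isolated[OF cr iso K])
    then show ?thesis
      using AG_adj_sym[OF JK] by (rule AG_dist_le_2)
  qed
qed

lemma openin_singleton_two_point_space:
  assumes "t1_space X" and "topspace X = {a, b}"
  shows "openin X {a}"
  using closedin_t1_singleton[OF assms(1), of b] assms(2)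
  by (simp add: openin_closedin_eq insert_Diff_if)

lemma AG_ecc_two_points_le_1:
  assumes cr: "completely_regular_space X" and t1: "t1_space X"
    and X: "topspace X = {a, b}" "a \<noteq> b"
  shows "AG_ecc X (ideal_vanishing_outside X {a}) \<le> 1"
proof (rule AG_ecc_le)
  fix J assume "J \<in> AX X"
  then have J: "is_ideal_CX X J" "coz J \<noteq> {}" and not_dense: "X closure_of coz J \<noteq> topspace X"
    unfolding AX_iff_coz_not_dense[OF cr] by blast+
  have iso: "openin X {a}"
    using t1 X(1) by (rule openin_singleton_two_point_space)
  have "coz J \<subseteq> {a, b}" "coz J \<noteq> {a, b}"
    using coz_subset_topspace[OF J(1)] not_dense X closure_of_topspace[of X] by auto
  then consider "a \<notin> coz J" | "a \<in> coz J" "coz J \<subseteq> {a}"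
    by blast
  then show "AG_dist X (ideal_vanishing_outside X {a}) J \<le> 1"
  proof cases
    case 1
    then have "AG_adj X (ideal_vanishing_outside X {a}) J"
      by (rule AG_adj_isolated[OF cr iso J])
    then show ?thesis
      by (rule AG_dist_le_1)
  next
    case 2
    then have "J = ideal_vanishing_outside X {a}"
      by (rule ideal_eq_vanishing_outside_singleton[OF J(1)])
    then have "AG_dist X (ideal_vanishing_outside X {a}) J \<le> enat 0"
      using AG_dist_self[of X J] by simp
    then show ?thesis
      by (rule order_trans) (simp add: zero_enat_def[symmetric])
  qed
qed

section \<open>Lower bounds on eccentricities\<close>

lemma one_le_AG_ecc:
  assumes "I \<in> AX X"
  shows "1 \<le> AG_ecc X I"
proof -
  obtain J where J: "AG_adj X I J"
    using assms by (rule AX_has_neighbour)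
  then have "J \<in> AX X" and "I \<noteq> J"
    unfolding AG_adj_def by simp_all
  then show ?thesis
    by (intro AG_ecc_ge[of J] one_le_AG_dist)
qed

lemma regular_t1_space_separate_closure:
  assumes "regular_space X" and "t1_space X"
    and "p \<in> topspace X" "q \<in> topspace X" "p \<noteq> q"
  obtains W where "openin X W" "p \<in> W" "q \<notin> X closure_of W"
proof -
  have "closedin X {q}" and "p \<in> topspace X - {q}"
    using assms closedin_t1_singleton by auto
  then obtain W where "openin X W" "p \<in> W" "disjnt {q} (X closure_of W)"
    using assms(1) unfolding regular_space by blast
  then show ?thesis
    using that by simp
qed

lemma two_le_AG_ecc_of_open:
  assumes cr: "completely_regular_space X" and I: "I \<in> AX X"
    and V: "openin X V" "V \<inter> coz I \<noteq> {}" "V \<noteq> coz I" "X closure_of V \<noteq> topspace X"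
  shows "2 \<le> AG_ecc X I"
proof -
  have "ideal_vanishing_outside X V \<in> AX X"
    using V by (intro vanishing_outside_in_AX[OF cr]) auto
  moreover have "coz (ideal_vanishing_outside X V) = V"
    by (rule coz_vanishing_outside[OF cr V(1)])
  then have "2 \<le> AG_dist X I (ideal_vanishing_outside X V)"
    using V(2,3) by (intro two_le_AG_dist) (auto simp: AG_adj_iff_disjoint_coz)
  ultimately show ?thesis
    by (rule AG_ecc_ge)
qed

lemma two_points_distinct_from:
  assumes "infinite S \<or> 2 < card S"
  obtains c d where "c \<in> S" "d \<in> S" "c \<noteq> u" "d \<noteq> u" "c \<noteq> d"
proof -
  have not_sub: "\<not> S - {u} \<subseteq> {c}" for c
  proof
    assume "S - {u} \<subseteq> {c}"
    then have "S \<subseteq> {u, c}"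
      by blast
    then have "finite S" and "card S \<le> card {u, c}"
      by (simp_all add: finite_subset card_mono)
    moreover have "card {u, c} \<le> 2"
      by (simp add: card_insert_le_m1)
    ultimately show False
      using assms by linarith
  qed
  obtain c where "c \<in> S" "c \<noteq> u"
    using not_sub[of u] by blast
  moreover obtain d where "d \<in> S" "d \<noteq> u" "d \<noteq> c"
    using not_sub[of c] by blast
  ultimately show ?thesis
    using that by blast
qed

lemma two_le_AG_ecc_coz_two_points:
  assumes cr: "completely_regular_space X" and t1: "t1_space X" and I: "I \<in> AX X"
    and ab: "a \<in> coz I" "b \<in> coz I" "a \<noteq> b"
  shows "2 \<le> AG_ecc X I"
proof -
  have I': "is_ideal_CX X I" and not_dense: "X closure_of coz I \<noteq> topspace X"
    using I unfolding AX_iff_coz_not_dense[OF cr] by simp_all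
  obtain W where W: "openin X W" "a \<in> W" "b \<notin> X closure_of W"
    using regular_t1_space_separate_closure[OF completely_regular_imp_regular_space[OF cr] t1]
      ab coz_subset_topspace[OF I'] by blast
  have "X closure_of (coz I \<inter> W) \<subseteq> X closure_of coz I"
    by (simp add: closure_of_mono)
  then have "X closure_of (coz I \<inter> W) \<noteq> topspace X"
    using not_dense closure_of_subset_topspace[of X "coz I"] by blast
  moreover have "b \<notin> W"
    using W(3) closure_of_subset[OF openin_subset[OF W(1)]] by blast
  moreover have "openin X (coz I \<inter> W)"
    using openin_coz[OF I'] W(1) by (rule openin_Int)
  ultimately show ?thesis
    using ab W(2) by (intro two_le_AG_ecc_of_open[OF cr I]) auto
qed

lemma two_le_AG_ecc_coz_singleton:
  assumes cr: "completely_regular_space X" and t1: "t1_space X" and I: "I \<in> AX X"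
    and a: "coz I = {a}"
    and cd: "c \<in> topspace X" "d \<in> topspace X" "c \<noteq> a" "d \<noteq> a" "c \<noteq> d"
  shows "2 \<le> AG_ecc X I"
proof -
  have I': "is_ideal_CX X I"
    using I unfolding AX_iff_coz_not_dense[OF cr] by simp
  obtain W where W: "openin X W" "c \<in> W" "d \<notin> X closure_of W"
    using regular_t1_space_separate_closure[OF completely_regular_imp_regular_space[OF cr] t1 cd(1,2,5)] .
  have "a \<in> topspace X"
    using coz_subset_topspace[OF I'] a by blast
  then have "X closure_of {a} = {a}"
    by (simp add: closure_of_closedin closedin_t1_singleton[OF t1])
  then have "X closure_of ({a} \<union> W) = {a} \<union> X closure_of W"
    by (simp only: closure_of_Un)
  then have "X closure_of ({a} \<union> W) \<noteq> topspace X"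
    using W(3) cd(2,4) by blast
  moreover have "openin X ({a} \<union> W)"
    using openin_coz[OF I'] W(1) unfolding a by (rule openin_Un)
  ultimately show ?thesis
    using a W(2) cd(3) by (intro two_le_AG_ecc_of_open[OF cr I]) auto
qed

lemma two_le_AG_ecc:
  assumes ty: "tychonoff_space X" and I: "I \<in> AX X"
    and big: "infinite (topspace X) \<or> 2 < card (topspace X)"
  shows "2 \<le> AG_ecc X I"
proof -
  have cr: "completely_regular_space X" and t1: "t1_space X"
    using ty unfolding tychonoff_space_def by simp_all
  obtain a where a: "a \<in> coz I"
    using I unfolding AX_iff_coz_not_dense[OF cr] by blast
  show ?thesis
  proof (cases "coz I = {a}")
    case True
    obtain c d where "c \<in> topspace X" "d \<in> topspace X" "c \<noteq> a" "d \<noteq> a" "c \<noteq> d"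
      using big by (rule two_points_distinct_from)
    with cr t1 I True show ?thesis
      by (rule two_le_AG_ecc_coz_singleton)
  next
    case False
    then obtain b where "b \<in> coz I" "a \<noteq> b"
      using a by blast
    with cr t1 I a show ?thesis
      by (rule two_le_AG_ecc_coz_two_points)
  qed
qed

text \<open>The cozero set of a common neighbour would avoid both \<open>W\<close> and its exterior, which
  together are dense.\<close>

lemma no_common_neighbour_exterior:
  assumes cr: "completely_regular_space X" and W: "openin X W" "W \<subseteq> coz I"
    and IK: "AG_adj X I K"
    and KJ: "AG_adj X K (ideal_vanishing_outside X (topspace X - X closure_of W))"
  shows False
proof -
  have K: "is_ideal_CX X K" "coz K \<noteq> {}"
    using IK unfolding AG_adj_iff_disjoint_coz by simp_all
  have "coz K \<inter> W = {}"
    using IK W(2) unfolding AG_adj_iff_disjoint_coz by blast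
  then have "coz K \<inter> X closure_of W = {}"
    using openin_Int_closure_of_eq_empty[OF openin_coz[OF K(1)]] by simp
  moreover have "coz K \<inter> (topspace X - X closure_of W) = {}"
    using KJ coz_vanishing_outside[OF cr, of "topspace X - X closure_of W"]
    unfolding AG_adj_iff_disjoint_coz by (simp add: openin_diff)
  ultimately show False
    using K coz_subset_topspace[OF K(1)] by blast
qed

lemma three_le_AG_ecc:
  assumes ty: "tychonoff_space X" and I: "I \<in> AX X"
    and no_iso: "\<nexists>x. x \<in> topspace X \<and> openin X {x}"
  shows "3 \<le> AG_ecc X I"
proof -
  have cr: "completely_regular_space X" and t1: "t1_space X"
    using ty unfolding tychonoff_space_def by simp_all
  have I': "is_ideal_CX X I" "coz I \<noteq> {}"
    using I unfolding AX_iff_coz_not_dense[OF cr] by simp_all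
  have U: "openin X (coz I)" "coz I \<subseteq> topspace X"
    using openin_coz[OF I'(1)] coz_subset_topspace[OF I'(1)] by blast+
  obtain a where a: "a \<in> coz I"
    using I'(2) by blast
  have "coz I \<noteq> {a}"
    using U a no_iso by auto
  then obtain b where b: "b \<in> coz I" "b \<noteq> a"
    using a by blast
  obtain W0 where W0: "openin X W0" "a \<in> W0" "b \<notin> X closure_of W0"
    using regular_t1_space_separate_closure[OF completely_regular_imp_regular_space[OF cr] t1]
      a b U(2) by blast
  define W where "W = coz I \<inter> W0"
  define V where "V = topspace X - X closure_of W"
  have W: "openin X W" "a \<in> W" "W \<subseteq> coz I"
    unfolding W_def using U(1) W0(1,2) a by auto
  have "X closure_of W \<subseteq> X closure_of W0"
    unfolding W_def by (simp add: closure_of_mono)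
  then have "b \<in> V"
    unfolding V_def using W0(3) b U(2) by blast
  have "a \<notin> X closure_of V"
    using openin_Int_closure_of_eq_empty[OF W(1), of V] closure_of_subset[OF openin_subset[OF W(1)]]
      W(2) unfolding V_def by blast
  then have "X closure_of V \<noteq> topspace X" and "a \<notin> V"
    using a U(2) closure_of_subset[of V X] unfolding V_def by blast+
  have cJ: "coz (ideal_vanishing_outside X V) = V"
    unfolding V_def by (rule coz_vanishing_outside[OF cr]) (simp add: openin_diff)
  have "ideal_vanishing_outside X V \<in> AX X"
    using \<open>X closure_of V \<noteq> topspace X\<close> \<open>b \<in> V\<close>
    by (intro vanishing_outside_in_AX[OF cr]) (auto simp: V_def openin_diff)
  moreover have "3 \<le> AG_dist X I (ideal_vanishing_outside X V)"
  proof (rule three_le_AG_dist)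
    show "I \<noteq> ideal_vanishing_outside X V"
      using cJ a \<open>a \<notin> V\<close> by auto
    show "\<not> AG_adj X I (ideal_vanishing_outside X V)"
      using cJ b \<open>b \<in> V\<close> unfolding AG_adj_iff_disjoint_coz by blast
    show "\<not> AG_adj X K (ideal_vanishing_outside X V)" if "AG_adj X I K" for K
      using no_common_neighbour_exterior[OF cr W(1,3) that] unfolding V_def by blast
  qed
  ultimately show ?thesis
    by (rule AG_ecc_ge)
qed

lemma AG_rad_two_points:
  assumes ty: "tychonoff_space X" and X: "topspace X = {a, b}" "a \<noteq> b"
  shows "AG_rad X = 1"
proof (rule AG_rad_eqI)
  have cr: "completely_regular_space X" and t1: "t1_space X"
    using ty unfolding tychonoff_space_def by simp_all
  have "openin X {a}"
    using t1 X(1) by (rule openin_singleton_two_point_space)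
  then show "ideal_vanishing_outside X {a} \<in> AX X"
    using X by (intro vanishing_outside_isolated_in_AX[OF cr t1, of _ b]) auto
  show "AG_ecc X (ideal_vanishing_outside X {a}) \<le> 1"
    using cr t1 X by (rule AG_ecc_two_points_le_1)
qed (rule one_le_AG_ecc)

lemma AG_rad_isolated:
  assumes ty: "tychonoff_space X" and big: "infinite (topspace X) \<or> 2 < card (topspace X)"
    and iso: "openin X {x}"
  shows "AG_rad X = 2"
proof (rule AG_rad_eqI)
  have cr: "completely_regular_space X" and t1: "t1_space X"
    using ty unfolding tychonoff_space_def by simp_all
  obtain y where "y \<in> topspace X" "y \<noteq> x"
    using big by (rule two_points_distinct_from)
  then show "ideal_vanishing_outside X {x} \<in> AX X"
    by (rule vanishing_outside_isolated_in_AX[OF cr t1 iso])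
  show "AG_ecc X (ideal_vanishing_outside X {x}) \<le> 2"
    using cr iso by (rule AG_ecc_isolated_le_2)
qed (rule two_le_AG_ecc[OF ty _ big])

lemma AG_rad_no_isolated:
  assumes ty: "tychonoff_space X" and "a \<in> topspace X" "b \<in> topspace X" "a \<noteq> b"
    and no_iso: "\<nexists>x. x \<in> topspace X \<and> openin X {x}"
  shows "AG_rad X = 3"
proof -
  have cr: "completely_regular_space X" and t1: "t1_space X"
    using ty unfolding tychonoff_space_def by simp_all
  obtain W where W: "openin X W" "a \<in> W" "b \<notin> X closure_of W"
    using regular_t1_space_separate_closure[OF completely_regular_imp_regular_space[OF cr] t1]
      assms(2-4) by blast
  have "W \<noteq> {}" and "X closure_of W \<noteq> topspace X"
    using W(2,3) assms(3) by blast+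
  then have I: "ideal_vanishing_outside X W \<in> AX X"
    by (rule vanishing_outside_in_AX[OF cr W(1)])
  show ?thesis
    using I AG_ecc_le_3[OF cr I] three_le_AG_ecc[OF ty _ no_iso] by (rule AG_rad_eqI)
qed

theorem mainTheorem12:
  fixes X :: "'a topology"
  assumes "tychonoff_space X"
    and "\<exists>x\<in>topspace X. \<exists>y\<in>topspace X. x \<noteq> y"
  shows "(finite (topspace X) \<and> card (topspace X) = 2 \<longrightarrow> AG_rad X = 1)
    \<and> (infinite (topspace X) \<or> card (topspace X) > 2 \<longrightarrow>
        ((\<exists>x\<in>topspace X. openin X {x}) \<longrightarrow> AG_rad X = 2) \<and>
        ((\<nexists>x. x \<in> topspace X \<and> openin X {x}) \<longrightarrow> AG_rad X = 3))"
proof (intro conjI impI)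
  assume "finite (topspace X) \<and> card (topspace X) = 2"
  then obtain a b where "topspace X = {a, b}" "a \<noteq> b"
    by (auto simp: card_2_iff)
  then show "AG_rad X = 1"
    by (rule AG_rad_two_points[OF assms(1)])
next
  assume big: "infinite (topspace X) \<or> card (topspace X) > 2"
    and "\<exists>x\<in>topspace X. openin X {x}"
  then obtain x where "openin X {x}"
    by blast
  then show "AG_rad X = 2"
    by (rule AG_rad_isolated[OF assms(1) big])
next
  assume "\<nexists>x. x \<in> topspace X \<and> openin X {x}"
  moreover obtain a b where "a \<in> topspace X" "b \<in> topspace X" "a \<noteq> b"
    using assms(2) by blast
  ultimately show "AG_rad X = 3"
    using AG_rad_no_isolated[OF assms(1)] by simp
qed

end
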